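(* Let $f_1,\dots,f_n\colon(c_1,c_2)\to\mathbb R$ and $\eta\colon(c_1,c_2)\times\mathbb R\to(0,\infty)$ be smooth. The manifold $(c_1,c_2)\times\mathbb R^{n+1}$ with the metric $(\star)$ is complete if $(c_1,c_2)=\mathbb R$ and there exists a positive continuous function $r\colon\mathbb R\to(0,\infty)$ with $\eta(x,u)\ge r(u)$ for all $x,u$.
   Context: The metric $(\star)$: on $(c_1,c_2)\times\mathbb R^{n+1}$ with coordinates $(x,u,v_1,\dots,v_n)$, with conventions $v_0=u$, $v_{-1}=v_{n+1}=0$, $f_0=f_{n+1}=0$, $g_{\eta,f}=\eta(x,u)^2dx^2+\sum_{j=0}^n\big(dv_j+(v_{j-1}f_j(x)-v_{j+1}f_{j+1}(x))dx\big)^2$. *)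

theory Defs
  imports "HOL-Analysis.Analysis"
begin

fun Ck :: "nat \<Rightarrow> ('a::euclidean_space \<Rightarrow> real) \<Rightarrow> bool" where
  "Ck 0 h \<longleftrightarrow> continuous_on UNIV h"
| "Ck (Suc k) h \<longleftrightarrow> (\<forall>p. h differentiable (at p)) \<and>
      (\<forall>b\<in>Basis. Ck k (\<lambda>p. frechet_derivative h (at p) b))"

definition smooth :: "('a::euclidean_space \<Rightarrow> real) \<Rightarrow> bool" where
  "smooth h \<longleftrightarrow> (\<forall>k. Ck k h)"

(* C^1 curve component (on all of R; any C^1 curve on [0,1] extends to one) *)
definition C1curve :: "(real \<Rightarrow> real) \<Rightarrow> bool" where
  "C1curve h \<longleftrightarrow> (\<forall>t. (h has_real_derivative deriv h t) (at t)) \<and> continuous_on UNIV (deriv h)"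

definition fext :: "nat \<Rightarrow> (nat \<Rightarrow> real \<Rightarrow> real) \<Rightarrow> nat \<Rightarrow> real \<Rightarrow> real" where
  "fext n f j = (if 1 \<le> j \<and> j \<le> n then f j else (\<lambda>_. 0))"

(* v_j with v_{-1} = v_{n+1} = 0; here v 0 = u *)
definition vprev :: "(nat \<Rightarrow> real) \<Rightarrow> nat \<Rightarrow> real" where
  "vprev v j = (if j = 0 then 0 else v (j - 1))"

definition vnext :: "nat \<Rightarrow> (nat \<Rightarrow> real) \<Rightarrow> nat \<Rightarrow> real" where
  "vnext n v j = (if j + 1 \<le> n then v (j + 1) else 0)"

(* the quadratic form g_{eta,f} at the point (x, v_0 = u, v_1, ..., v_n)
   evaluated on the tangent vector (dx, dv_0, ..., dv_n) *)
definition gform :: "nat \<Rightarrow> (real \<Rightarrow> real \<Rightarrow> real) \<Rightarrow> (nat \<Rightarrow> real \<Rightarrow> real)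
    \<Rightarrow> real \<Rightarrow> (nat \<Rightarrow> real) \<Rightarrow> real \<Rightarrow> (nat \<Rightarrow> real) \<Rightarrow> real" where
  "gform n \<eta> f x v dx dv =
     (\<eta> x (v 0))\<^sup>2 * dx\<^sup>2 +
     (\<Sum>j\<le>n. (dv j + (vprev v j * fext n f j x - vnext n v j * fext n f (j + 1) x) * dx)\<^sup>2)"

definition Mpts :: "nat \<Rightarrow> (real \<times> (nat \<Rightarrow> real)) set" where
  "Mpts n = {(x, v). \<forall>j>n. v j = 0}"

definition curves :: "nat \<Rightarrow> real \<times> (nat \<Rightarrow> real) \<Rightarrow> real \<times> (nat \<Rightarrow> real)
    \<Rightarrow> ((real \<Rightarrow> real) \<times> (nat \<Rightarrow> real \<Rightarrow> real)) set" where
  "curves n p q = {(X, V). C1curve X \<and> (\<forall>j\<le>n. C1curve (V j)) \<and>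
      X 0 = fst p \<and> X 1 = fst q \<and> (\<forall>j\<le>n. V j 0 = snd p j \<and> V j 1 = snd q j)}"

definition glength :: "nat \<Rightarrow> (real \<Rightarrow> real \<Rightarrow> real) \<Rightarrow> (nat \<Rightarrow> real \<Rightarrow> real)
    \<Rightarrow> (real \<Rightarrow> real) \<Rightarrow> (nat \<Rightarrow> real \<Rightarrow> real) \<Rightarrow> real" where
  "glength n \<eta> f X V = integral {0..1}
     (\<lambda>t. sqrt (gform n \<eta> f (X t) (\<lambda>j. V j t) (deriv X t) (\<lambda>j. deriv (V j) t)))"

definition gdist :: "nat \<Rightarrow> (real \<Rightarrow> real \<Rightarrow> real) \<Rightarrow> (nat \<Rightarrow> real \<Rightarrow> real)
    \<Rightarrow> real \<times> (nat \<Rightarrow> real) \<Rightarrow> real \<times> (nat \<Rightarrow> real) \<Rightarrow> real" where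
  "gdist n \<eta> f p q = Inf ((\<lambda>(X, V). glength n \<eta> f X V) ` curves n p q)"

definition gcomplete :: "nat \<Rightarrow> (real \<Rightarrow> real \<Rightarrow> real) \<Rightarrow> (nat \<Rightarrow> real \<Rightarrow> real) \<Rightarrow> bool" where
  "gcomplete n \<eta> f \<longleftrightarrow>
     (\<forall>P :: nat \<Rightarrow> real \<times> (nat \<Rightarrow> real).
        (\<forall>k. P k \<in> Mpts n) \<and>
        (\<forall>e>0. \<exists>N. \<forall>m\<ge>N. \<forall>k\<ge>N. gdist n \<eta> f (P m) (P k) < e)
        \<longrightarrow> (\<exists>p\<in>Mpts n. (\<lambda>k. gdist n \<eta> f (P k) p) \<longlonglongrightarrow> 0))"

end

theory Submission
  imports Defs
begin

text \<open>
  Pairing the one-forms dv_j + (v_{j-1} f_j - v_{j+1} f_{j+1}) dx of the metric with v, the f-terms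
  telescope away. Hence \<langle>v\<rangle> = sqrt (1 + |v|^2) is 1-Lipschitz for the Riemannian distance and metric
  balls have bounded v. There \<eta> \<ge> r is bounded below by a positive constant, which controls dx and
  then every dv_j, so on a metric ball the Riemannian distance dominates a multiple of the Euclidean
  one. A Cauchy sequence therefore converges in coordinates, and comparing with straight segments
  shows that it converges for the Riemannian distance as well. Smoothness of \<eta> and f enters only
  through continuity, and positivity of \<eta> follows from \<eta> \<ge> r > 0.
\<close>

lemma abs_diff_le_integral_of_deriv_bound:
  fixes h h' g :: "real \<Rightarrow> real"
  assumes h: "\<And>t. (h has_real_derivative h' t) (at t)"
    and g: "continuous_on {0..1} g" "\<And>t. t \<in> {0..1} \<Longrightarrow> 0 \<le> g t"
    and h'_le: "\<And>t. t \<in> {0..1} \<Longrightarrow> \<bar>h' t\<bar> \<le> C * g t"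
    and C: "0 \<le> C" and t: "t \<in> {0..1}"
  shows "\<bar>h t - h 0\<bar> \<le> C * integral {0..1} g"
proof -
  have sub: "{0..t} \<subseteq> {0..1}" using t by auto
  have ftc: "(h' has_integral (h t - h 0)) {0..t}"
    using t h by (intro fundamental_theorem_of_calculus)
      (auto simp: has_real_derivative_iff_has_vector_derivative[symmetric] has_field_derivative_at_within)
  have gi1: "g integrable_on {0..1}" using g(1) integrable_continuous_real by blast
  have gi: "g integrable_on {0..t}" using integrable_on_subinterval[OF gi1 sub] .
  have Cg: "((\<lambda>s. C * g s) has_integral C * integral {0..t} g) {0..t}"
    using has_integral_mult_right[OF integrable_integral[OF gi]] by simp
  have "h t - h 0 \<le> C * integral {0..t} g"
    by (rule has_integral_le[OF ftc Cg]) (use h'_le sub in force)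
  moreover have "- (h t - h 0) \<le> C * integral {0..t} g"
    by (rule has_integral_le[OF has_integral_neg[OF ftc] Cg]) (use h'_le sub in force)
  moreover have "C * integral {0..t} g \<le> C * integral {0..1} g"
    using C by (intro mult_left_mono integral_subset_le[OF sub gi gi1]) (use g(2) in auto)
  ultimately show ?thesis by linarith
qed

lemma continuous_on_compact_abs_bound:
  fixes g :: "'a::topological_space \<Rightarrow> real"
  assumes "continuous_on S g" "compact S"
  shows "\<exists>B. \<forall>x\<in>S. \<bar>g x\<bar> \<le> B"
  using compact_imp_bounded[OF compact_continuous_image[OF assms]] by (auto simp: bounded_real)

lemma continuous_on_compact_pos_bound_below:
  fixes g :: "'a::topological_space \<Rightarrow> real"
  assumes "continuous_on S g" "compact S" "\<And>x. x \<in> S \<Longrightarrow> 0 < g x"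
  obtains M where "0 < M" "\<And>x. x \<in> S \<Longrightarrow> M \<le> g x"
proof (cases "S = {}")
  case False
  then obtain x0 where "x0 \<in> S" "\<And>x. x \<in> S \<Longrightarrow> g x0 \<le> g x"
    using continuous_attains_inf[OF assms(2) _ assms(1)] by blast
  then show ?thesis using that assms(3) by blast
qed (use that[of 1] in auto)

lemma convex_line_mem:
  fixes S :: "real set"
  assumes "convex S" "a \<in> S" "b \<in> S" "t \<in> {0..1}"
  shows "a + t * (b - a) \<in> S"
proof -
  have "(1 - t) *\<^sub>R a + t *\<^sub>R b \<in> S" using assms by (auto simp: convex_alt)
  moreover have "(1 - t) *\<^sub>R a + t *\<^sub>R b = a + t * (b - a)" by (simp add: algebra_simps)
  ultimately show ?thesis by simp
qed

lemma abs_line_le: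
  fixes a b :: real
  assumes "\<bar>a\<bar> \<le> R" "\<bar>b\<bar> \<le> R" "t \<in> {0..1}"
  shows "\<bar>a + t * (b - a)\<bar> \<le> R"
proof -
  have "a + t * (b - a) \<in> {-R..R}"
    by (rule convex_line_mem) (use assms in \<open>auto simp: abs_le_iff\<close>)
  then show ?thesis by (simp add: abs_le_iff)
qed

lemma Cauchy_if_dominated:
  fixes a :: "nat \<Rightarrow> real" and d :: "nat \<Rightarrow> nat \<Rightarrow> real"
  assumes d: "\<forall>e>0. \<exists>N. \<forall>m\<ge>N. \<forall>k\<ge>N. d m k < e"
    and le: "\<And>m k. m \<ge> N0 \<Longrightarrow> k \<ge> N0 \<Longrightarrow> \<bar>a k - a m\<bar> \<le> C * d m k"
    and C: "0 < C"
  shows "Cauchy a"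
proof (rule CauchyI)
  fix e :: real assume "0 < e"
  then obtain N where N: "\<And>m k. m \<ge> N \<Longrightarrow> k \<ge> N \<Longrightarrow> d m k < e / C"
    using d C by (meson divide_pos_pos)
  have "\<bar>a k - a m\<bar> < e" if "m \<ge> max N N0" "k \<ge> max N N0" for m k
  proof -
    have "\<bar>a k - a m\<bar> \<le> C * d m k" using le that by simp
    also have "\<dots> < e" using N[of m k] that C by (simp add: field_simps)
    finally show ?thesis .
  qed
  then show "\<exists>M. \<forall>m\<ge>M. \<forall>k\<ge>M. norm (a m - a k) < e" by (metis abs_minus_commute real_norm_def)
qed

definition vbracket :: "nat \<Rightarrow> (nat \<Rightarrow> real) \<Rightarrow> real" where
  "vbracket n v = sqrt (1 + (\<Sum>j\<le>n. (v j)\<^sup>2))"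

lemma one_le_vbracket: "1 \<le> vbracket n v"
  unfolding vbracket_def by (simp add: sum_nonneg)

lemma abs_le_vbracket:
  assumes "j \<le> n"
  shows "\<bar>v j\<bar> \<le> vbracket n v"
proof -
  have "(v j)\<^sup>2 \<le> 1 + (\<Sum>i\<le>n. (v i)\<^sup>2)"
    using member_le_sum[of j "{..n}" "\<lambda>i. (v i)\<^sup>2"] assms by simp
  then show ?thesis unfolding vbracket_def using real_sqrt_le_mono by fastforce
qed

(* The j-th square in the metric is (dv_j + twist_coeff n f v x j * dx)^2. *)
definition twist_coeff :: "nat \<Rightarrow> (nat \<Rightarrow> real \<Rightarrow> real) \<Rightarrow> (nat \<Rightarrow> real) \<Rightarrow> real \<Rightarrow> nat \<Rightarrow> real" where
  "twist_coeff n f v x j = vprev v j * fext n f j x - vnext n v j * fext n f (j + 1) x"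

lemma sum_mult_twist_coeff: "(\<Sum>j\<le>n. v j * twist_coeff n f v x j) = 0"
proof -
  define F where "F j = fext n f j x" for j
  have prev_terms: "(\<Sum>j\<le>n. v j * vprev v j * F j) = (\<Sum>i<n. v i * v (i + 1) * F (i + 1))"
  proof (cases n)
    case (Suc m)
    have "(\<Sum>j\<le>n. v j * vprev v j * F j)
        = v 0 * vprev v 0 * F 0 + (\<Sum>i\<le>m. v (Suc i) * vprev v (Suc i) * F (Suc i))"
      unfolding Suc by (rule sum.atMost_Suc_shift)
    also have "\<dots> = (\<Sum>i\<le>m. v i * v (i + 1) * F (i + 1))" by (simp add: vprev_def ac_simps)
    finally show ?thesis using Suc by (simp add: lessThan_Suc_atMost)
  qed (simp add: vprev_def)
  have next_terms: "(\<Sum>j\<le>n. v j * vnext n v j * F (j + 1)) = (\<Sum>i<n. v i * v (i + 1) * F (i + 1))"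
    by (simp add: lessThan_Suc_atMost[symmetric] vnext_def)
  show ?thesis using prev_terms next_terms
    by (simp add: twist_coeff_def F_def[symmetric] algebra_simps sum_subtractf)
qed

lemma abs_twist_coeff_le:
  assumes "\<And>i. i \<le> n \<Longrightarrow> \<bar>v i\<bar> \<le> R" "\<And>i. \<bar>fext n f i x\<bar> \<le> F" "0 \<le> R" "j \<le> n"
  shows "\<bar>twist_coeff n f v x j\<bar> \<le> 2 * R * F"
proof -
  have neighbours: "\<bar>vprev v j\<bar> \<le> R" "\<bar>vnext n v j\<bar> \<le> R"
    using assms(1)[of "j - 1"] assms(1)[of "j + 1"] assms(3,4) by (auto simp: vprev_def vnext_def)
  have "\<bar>twist_coeff n f v x j\<bar>
      \<le> \<bar>vprev v j\<bar> * \<bar>fext n f j x\<bar> + \<bar>vnext n v j\<bar> * \<bar>fext n f (j + 1) x\<bar>"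
    unfolding twist_coeff_def by (simp add: abs_mult[symmetric] abs_triangle_ineq4)
  also have "\<dots> \<le> R * F + R * F"
    using assms neighbours by (intro add_mono mult_mono) auto
  finally show ?thesis by (simp add: mult_ac)
qed

definition twisted_deriv :: "nat \<Rightarrow> (nat \<Rightarrow> real \<Rightarrow> real)
    \<Rightarrow> (real \<Rightarrow> real) \<Rightarrow> (nat \<Rightarrow> real \<Rightarrow> real) \<Rightarrow> nat \<Rightarrow> real \<Rightarrow> real" where
  "twisted_deriv n f X V j t = deriv (V j) t + twist_coeff n f (\<lambda>i. V i t) (X t) j * deriv X t"

definition speed :: "nat \<Rightarrow> (real \<Rightarrow> real \<Rightarrow> real) \<Rightarrow> (nat \<Rightarrow> real \<Rightarrow> real)
    \<Rightarrow> (real \<Rightarrow> real) \<Rightarrow> (nat \<Rightarrow> real \<Rightarrow> real) \<Rightarrow> real \<Rightarrow> real" where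
  "speed n \<eta> f X V t = sqrt (gform n \<eta> f (X t) (\<lambda>j. V j t) (deriv X t) (\<lambda>j. deriv (V j) t))"

lemma glength_eq_integral_speed: "glength n \<eta> f X V = integral {0..1} (speed n \<eta> f X V)"
  unfolding glength_def speed_def ..

lemma speed_eq:
  "speed n \<eta> f X V t
     = sqrt ((\<eta> (X t) (V 0 t) * deriv X t)\<^sup>2 + (\<Sum>j\<le>n. (twisted_deriv n f X V j t)\<^sup>2))"
  unfolding speed_def gform_def twisted_deriv_def twist_coeff_def by (simp add: power_mult_distrib)

lemma speed_nonneg: "0 \<le> speed n \<eta> f X V t"
  unfolding speed_eq by (simp add: sum_nonneg)

lemma abs_eta_deriv_x_le_speed: "\<bar>\<eta> (X t) (V 0 t)\<bar> * \<bar>deriv X t\<bar> \<le> speed n \<eta> f X V t"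
  unfolding speed_eq abs_mult[symmetric] by (rule real_le_rsqrt) (simp add: sum_nonneg)

lemma lower_bound_mult_abs_deriv_x_le_speed:
  assumes "M \<le> \<eta> (X t) (V 0 t)"
  shows "M * \<bar>deriv X t\<bar> \<le> speed n \<eta> f X V t"
proof -
  have "M * \<bar>deriv X t\<bar> \<le> \<bar>\<eta> (X t) (V 0 t)\<bar> * \<bar>deriv X t\<bar>"
    using assms by (intro mult_right_mono) auto
  also have "\<dots> \<le> speed n \<eta> f X V t" by (rule abs_eta_deriv_x_le_speed)
  finally show ?thesis .
qed

lemma L2_twisted_deriv_le_speed: "L2_set (\<lambda>j. twisted_deriv n f X V j t) {..n} \<le> speed n \<eta> f X V t"
  unfolding speed_eq L2_set_def by (rule real_sqrt_le_mono) simp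

lemma abs_twisted_deriv_le_speed:
  assumes "j \<le> n"
  shows "\<bar>twisted_deriv n f X V j t\<bar> \<le> speed n \<eta> f X V t"
proof -
  have "\<bar>twisted_deriv n f X V j t\<bar> \<le> L2_set (\<lambda>i. \<bar>twisted_deriv n f X V i t\<bar>) {..n}"
    using assms by (intro member_le_L2_set) auto
  then show ?thesis using L2_twisted_deriv_le_speed[of n f X V t \<eta>] by (simp add: L2_set_def)
qed

lemma speed_le_sum_abs:
  "speed n \<eta> f X V t \<le> \<bar>\<eta> (X t) (V 0 t)\<bar> * \<bar>deriv X t\<bar> + (\<Sum>j\<le>n. \<bar>twisted_deriv n f X V j t\<bar>)"
proof -
  have "speed n \<eta> f X V t
      \<le> sqrt ((\<eta> (X t) (V 0 t) * deriv X t)\<^sup>2) + sqrt (\<Sum>j\<le>n. (twisted_deriv n f X V j t)\<^sup>2)"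
    unfolding speed_eq by (rule sqrt_add_le_add_sqrt) (auto simp: sum_nonneg)
  also have "sqrt (\<Sum>j\<le>n. (twisted_deriv n f X V j t)\<^sup>2) \<le> (\<Sum>j\<le>n. \<bar>twisted_deriv n f X V j t\<bar>)"
    using L2_set_le_sum_abs unfolding L2_set_def .
  finally show ?thesis by (simp add: abs_mult)
qed

lemma sum_mult_twisted_deriv:
  "(\<Sum>j\<le>n. V j t * twisted_deriv n f X V j t) = (\<Sum>j\<le>n. V j t * deriv (V j) t)"
proof -
  have "(\<Sum>j\<le>n. V j t * twisted_deriv n f X V j t) = (\<Sum>j\<le>n. V j t * deriv (V j) t)
      + deriv X t * (\<Sum>j\<le>n. V j t * twist_coeff n f (\<lambda>i. V i t) (X t) j)"
    unfolding twisted_deriv_def sum_distrib_left sum.distrib[symmetric]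
    by (rule sum.cong) (auto simp: algebra_simps)
  then show ?thesis using sum_mult_twist_coeff[where v="\<lambda>i. V i t"] by simp
qed

lemma C1curve_continuous: "C1curve h \<Longrightarrow> continuous_on UNIV h"
  unfolding C1curve_def by (meson DERIV_isCont continuous_at_imp_continuous_on)

lemma curves_C1:
  assumes "(X, V) \<in> curves n p q"
  shows "\<And>t. (X has_real_derivative deriv X t) (at t)" "continuous_on UNIV X"
    "continuous_on UNIV (deriv X)"
    and "\<And>j t. j \<le> n \<Longrightarrow> (V j has_real_derivative deriv (V j) t) (at t)"
    "\<And>j. j \<le> n \<Longrightarrow> continuous_on UNIV (V j)" "\<And>j. j \<le> n \<Longrightarrow> continuous_on UNIV (deriv (V j))"
  using assms C1curve_continuous unfolding curves_def C1curve_def by auto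

lemma curves_endpoints:
  assumes "(X, V) \<in> curves n p q"
  shows "X 0 = fst p" "X 1 = fst q" "\<And>j. j \<le> n \<Longrightarrow> V j 0 = snd p j" "\<And>j. j \<le> n \<Longrightarrow> V j 1 = snd q j"
  using assms unfolding curves_def by auto

lemma glength_nonneg: "0 \<le> glength n \<eta> f X V"
  unfolding glength_eq_integral_speed
  by (cases "speed n \<eta> f X V integrable_on {0..1}")
     (auto intro: integral_nonneg speed_nonneg simp: not_integrable_integral)

definition line_x :: "real \<times> (nat \<Rightarrow> real) \<Rightarrow> real \<times> (nat \<Rightarrow> real) \<Rightarrow> real \<Rightarrow> real" where
  "line_x p q t = fst p + t * (fst q - fst p)"

definition line_v :: "real \<times> (nat \<Rightarrow> real) \<Rightarrow> real \<times> (nat \<Rightarrow> real) \<Rightarrow> nat \<Rightarrow> real \<Rightarrow> real" where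
  "line_v p q j t = snd p j + t * (snd q j - snd p j)"

lemma affine_has_deriv: "((\<lambda>t. a + t * (b - a)) has_real_derivative (b - a)) (at t)"
  by (rule derivative_eq_intros | simp)+

lemma deriv_affine: "deriv (\<lambda>t::real. a + t * (b - a)) t = b - a"
  by (rule DERIV_imp_deriv[OF affine_has_deriv])

lemma C1curve_affine: "C1curve (\<lambda>t. a + t * (b - a))"
  unfolding C1curve_def deriv_affine using affine_has_deriv by auto

lemma line_in_curves: "(line_x p q, line_v p q) \<in> curves n p q"
  unfolding curves_def line_x_def[abs_def] line_v_def[abs_def] using C1curve_affine by auto

lemma curves_nonempty: "curves n p q \<noteq> {}"
  using line_in_curves by blast

lemma deriv_line_x: "deriv (line_x p q) t = fst q - fst p"
  unfolding line_x_def[abs_def] by (rule deriv_affine)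

lemma deriv_line_v: "deriv (line_v p q j) t = snd q j - snd p j"
  unfolding line_v_def[abs_def] by (rule deriv_affine)

lemma gdist_le_glength:
  assumes "(X, V) \<in> curves n p q"
  shows "gdist n \<eta> f p q \<le> glength n \<eta> f X V"
  unfolding gdist_def
proof (rule cInf_lower)
  show "glength n \<eta> f X V \<in> (\<lambda>(X, V). glength n \<eta> f X V) ` curves n p q"
    using assms by force
  show "bdd_below ((\<lambda>(X, V). glength n \<eta> f X V) ` curves n p q)"
    by (rule bdd_belowI[where m=0]) (auto simp: glength_nonneg)
qed

lemma gdist_nonneg: "0 \<le> gdist n \<eta> f p q"
  unfolding gdist_def
  by (rule cInf_greatest) (use curves_nonempty in \<open>auto simp: glength_nonneg\<close>)

lemma gdist_lessE:
  assumes "gdist n \<eta> f p q < e"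
  obtains X V where "(X, V) \<in> curves n p q" "glength n \<eta> f X V < e"
proof -
  have "(\<lambda>(X, V). glength n \<eta> f X V) ` curves n p q \<noteq> {}" using curves_nonempty by blast
  from cInf_lessD[OF this assms[unfolded gdist_def]] show ?thesis using that by auto
qed

lemma gdist_ge_if_short_curves_ge:
  assumes C: "0 < C" and short: "gdist n \<eta> f p q < b"
    and ge: "\<And>X V. (X, V) \<in> curves n p q \<Longrightarrow> glength n \<eta> f X V < b \<Longrightarrow> \<phi> \<le> C * glength n \<eta> f X V"
  shows "\<phi> \<le> C * gdist n \<eta> f p q"
proof -
  have "\<phi> / C \<le> gdist n \<eta> f p q"
  proof (rule dense_ge)
    fix y assume "gdist n \<eta> f p q < y"
    with short obtain X V where cv: "(X, V) \<in> curves n p q"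
      and L: "glength n \<eta> f X V < y" "glength n \<eta> f X V < b"
      by (metis gdist_lessE min_less_iff_conj)
    have "\<phi> \<le> C * glength n \<eta> f X V" using ge[OF cv L(2)] .
    also have "\<dots> < C * y" using C L(1) by (rule mult_strict_left_mono[rotated])
    finally have "\<phi> < C * y" .
    with C show "\<phi> / C \<le> y" by (simp add: field_simps)
  qed
  then show ?thesis using C by (simp add: field_simps)
qed

locale continuous_coefficients =
  fixes n :: nat and \<eta> :: "real \<Rightarrow> real \<Rightarrow> real" and f :: "nat \<Rightarrow> real \<Rightarrow> real"
  assumes eta_continuous: "continuous_on UNIV (\<lambda>(x, u). \<eta> x u)"
    and fext_continuous: "\<And>j. continuous_on UNIV (fext n f j)"
begin

lemma speed_continuous:
  assumes cv: "(X, V) \<in> curves n p q"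
  shows "continuous_on {0..1} (speed n \<eta> f X V)"
proof -
  note C1 = curves_C1[OF cv]
  have vprev: "continuous_on UNIV (\<lambda>t. vprev (\<lambda>i. V i t) j)" if "j \<le> n" for j
    using that C1(5)[of "j - 1"] by (cases "j = 0") (auto simp: vprev_def)
  have vnext: "continuous_on UNIV (\<lambda>t. vnext n (\<lambda>i. V i t) j)" for j
    using C1(5)[of "j + 1"] by (cases "j + 1 \<le> n") (auto simp: vnext_def)
  have fext: "continuous_on UNIV (\<lambda>t. fext n f j (X t))" for j
    using continuous_on_compose2[OF fext_continuous C1(2)] by auto
  have twisted: "continuous_on UNIV (twisted_deriv n f X V j)" if "j \<le> n" for j
    unfolding twisted_deriv_def[abs_def] twist_coeff_def using that
    by (intro continuous_intros C1 vprev vnext fext)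
  have "continuous_on UNIV (\<lambda>t. \<eta> (X t) (V 0 t))"
    using continuous_on_compose2[OF eta_continuous, of UNIV "\<lambda>t. (X t, V 0 t)"] C1(2) C1(5)[of 0]
    by (auto intro: continuous_intros)
  then have "continuous_on UNIV (speed n \<eta> f X V)"
    unfolding speed_eq[abs_def] by (intro continuous_intros C1 twisted) auto
  then show ?thesis by (rule continuous_on_subset) simp
qed

lemma vbracket_curve_le:
  assumes cv: "(X, V) \<in> curves n p q" and t: "t \<in> {0..1}"
  shows "vbracket n (\<lambda>j. V j t) \<le> vbracket n (snd p) + glength n \<eta> f X V"
proof -
  note C1 = curves_C1[OF cv]
  define \<rho> where "\<rho> s = (\<Sum>j\<le>n. (V j s)\<^sup>2)" for s
  have \<rho>_nonneg: "0 \<le> \<rho> s" for s unfolding \<rho>_def by (simp add: sum_nonneg)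
  define h' where "h' s = (\<Sum>j\<le>n. V j s * deriv (V j) s) / sqrt (1 + \<rho> s)" for s
  have "(\<rho> has_real_derivative (\<Sum>j\<le>n. 2 * V j s * deriv (V j) s)) (at s)" for s
    unfolding \<rho>_def by (rule derivative_eq_intros C1 | simp add: ac_simps)+
  then have deriv: "((\<lambda>s. sqrt (1 + \<rho> s)) has_real_derivative h' s) (at s)" for s
    using \<rho>_nonneg[of s] unfolding h'_def
    by (auto intro!: derivative_eq_intros simp: sum_distrib_left sum_divide_distrib field_simps)
  have h'_le: "\<bar>h' s\<bar> \<le> 1 * speed n \<eta> f X V s" for s
  proof -
    have "\<bar>\<Sum>j\<le>n. V j s * deriv (V j) s\<bar> = \<bar>\<Sum>j\<le>n. V j s * twisted_deriv n f X V j s\<bar>"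
      by (simp add: sum_mult_twisted_deriv)
    also have "\<dots> \<le> (\<Sum>j\<le>n. \<bar>V j s\<bar> * \<bar>twisted_deriv n f X V j s\<bar>)"
      by (metis (no_types, lifting) abs_mult sum.cong sum_abs)
    also have "\<dots> \<le> L2_set (\<lambda>j. V j s) {..n} * L2_set (\<lambda>j. twisted_deriv n f X V j s) {..n}"
      by (rule L2_set_mult_ineq)
    also have "\<dots> \<le> sqrt (1 + \<rho> s) * speed n \<eta> f X V s"
      using \<rho>_nonneg[of s] L2_twisted_deriv_le_speed
      by (intro mult_mono) (auto simp: L2_set_def \<rho>_def sum_nonneg)
    finally show ?thesis
      using \<rho>_nonneg[of s] unfolding h'_def by (simp add: abs_divide pos_divide_le_eq mult.commute)
  qed
  have "\<bar>sqrt (1 + \<rho> t) - sqrt (1 + \<rho> 0)\<bar> \<le> 1 * integral {0..1} (speed n \<eta> f X V)"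
    by (rule abs_diff_le_integral_of_deriv_bound[OF deriv speed_continuous[OF cv] speed_nonneg h'_le _ t])
      simp
  moreover have "\<rho> 0 = (\<Sum>j\<le>n. (snd p j)\<^sup>2)" unfolding \<rho>_def using curves_endpoints(3)[OF cv] by simp
  ultimately show ?thesis unfolding glength_eq_integral_speed vbracket_def \<rho>_def by simp
qed

lemma vbracket_le_gdist: "vbracket n (snd q) \<le> vbracket n (snd p) + gdist n \<eta> f p q"
proof -
  have "vbracket n (snd q) - vbracket n (snd p) \<le> 1 * gdist n \<eta> f p q"
  proof (rule gdist_ge_if_short_curves_ge[where b="gdist n \<eta> f p q + 1"])
    fix X V assume cv: "(X, V) \<in> curves n p q"
    have "(\<Sum>j\<le>n. (V j 1)\<^sup>2) = (\<Sum>j\<le>n. (snd q j)\<^sup>2)"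
      by (rule sum.cong) (simp_all add: curves_endpoints(4)[OF cv])
    then have "vbracket n (snd q) = vbracket n (\<lambda>j. V j 1)" by (simp add: vbracket_def)
    then show "vbracket n (snd q) - vbracket n (snd p) \<le> 1 * glength n \<eta> f X V"
      using vbracket_curve_le[OF cv, of 1] by simp
  qed simp_all
  then show ?thesis by simp
qed

lemma curve_component_bound:
  assumes cv: "(X, V) \<in> curves n p q" and len: "vbracket n (snd p) + glength n \<eta> f X V \<le> R"
    and "t \<in> {0..1}" "j \<le> n"
  shows "\<bar>V j t\<bar> \<le> R"
  using abs_le_vbracket[of j n "\<lambda>i. V i t"] vbracket_curve_le[OF cv, of t] assms by simp

lemma curve_x_displacement:
  assumes cv: "(X, V) \<in> curves n p q" and M: "0 < M"
    and eta_ge: "\<And>x u. \<bar>u\<bar> \<le> R \<Longrightarrow> M \<le> \<eta> x u"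
    and len: "vbracket n (snd p) + glength n \<eta> f X V \<le> R" and t: "t \<in> {0..1}"
  shows "\<bar>X t - fst p\<bar> \<le> glength n \<eta> f X V / M"
proof -
  have X'_le: "\<bar>deriv X s\<bar> \<le> (1 / M) * speed n \<eta> f X V s" if s: "s \<in> {0..1}" for s
  proof -
    have "M * \<bar>deriv X s\<bar> \<le> speed n \<eta> f X V s"
      by (rule lower_bound_mult_abs_deriv_x_le_speed, rule eta_ge,
          rule curve_component_bound[OF cv len s]) simp
    then show ?thesis using M by (simp add: field_simps)
  qed
  have "\<bar>X t - X 0\<bar> \<le> (1 / M) * integral {0..1} (speed n \<eta> f X V)"
    using M by (intro abs_diff_le_integral_of_deriv_bound[OF curves_C1(1)[OF cv]
        speed_continuous[OF cv] speed_nonneg X'_le _ t]) auto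
  then show ?thesis unfolding curves_endpoints(1)[OF cv] glength_eq_integral_speed by simp
qed

lemma curve_v_displacement:
  assumes cv: "(X, V) \<in> curves n p q" and M: "0 < M"
    and eta_ge: "\<And>x u. \<bar>u\<bar> \<le> R \<Longrightarrow> M \<le> \<eta> x u"
    and len: "vbracket n (snd p) + glength n \<eta> f X V \<le> R"
    and fext_le: "\<And>x j. \<bar>x - fst p\<bar> \<le> glength n \<eta> f X V / M \<Longrightarrow> \<bar>fext n f j x\<bar> \<le> F"
    and j: "j \<le> n" and t: "t \<in> {0..1}"
  shows "\<bar>V j t - snd p j\<bar> \<le> (1 + 2 * R * F / M) * glength n \<eta> f X V"
proof -
  have R: "0 \<le> R" using len one_le_vbracket[of n "snd p"] glength_nonneg[of n \<eta> f X V] by linarith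
  have F: "0 \<le> F" using fext_le[of "fst p" 0] glength_nonneg[of n \<eta> f X V] M by force
  have fext_X: "\<bar>fext n f i (X s)\<bar> \<le> F" if "s \<in> {0..1}" for s i
    using fext_le curve_x_displacement[OF cv M eta_ge len that] by blast
  have V'_le: "\<bar>deriv (V j) s\<bar> \<le> (1 + 2 * R * F / M) * speed n \<eta> f X V s" if s: "s \<in> {0..1}" for s
  proof -
    define c where "c = twist_coeff n f (\<lambda>i. V i s) (X s) j"
    have c: "\<bar>c\<bar> \<le> 2 * R * F"
      unfolding c_def using curve_component_bound[OF cv len s] fext_X[OF s] R j
      by (intro abs_twist_coeff_le) auto
    have "M * \<bar>deriv X s\<bar> \<le> speed n \<eta> f X V s"
      by (rule lower_bound_mult_abs_deriv_x_le_speed, rule eta_ge,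
          rule curve_component_bound[OF cv len s]) simp
    then have "2 * R * F * (M * \<bar>deriv X s\<bar>) \<le> 2 * R * F * speed n \<eta> f X V s"
      using R F by (intro mult_left_mono) auto
    then have X': "2 * R * F * \<bar>deriv X s\<bar> \<le> 2 * R * F / M * speed n \<eta> f X V s"
      using M by (simp add: field_simps)
    have "deriv (V j) s = twisted_deriv n f X V j s - c * deriv X s"
      unfolding twisted_deriv_def c_def by simp
    then have "\<bar>deriv (V j) s\<bar> \<le> \<bar>twisted_deriv n f X V j s\<bar> + \<bar>c\<bar> * \<bar>deriv X s\<bar>"
      by (simp add: abs_mult[symmetric] abs_triangle_ineq4)
    also have "\<dots> \<le> speed n \<eta> f X V s + 2 * R * F * \<bar>deriv X s\<bar>"
      by (intro add_mono abs_twisted_deriv_le_speed j mult_right_mono c) auto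
    finally show ?thesis using X' by (simp add: algebra_simps)
  qed
  have "\<bar>V j t - V j 0\<bar> \<le> (1 + 2 * R * F / M) * integral {0..1} (speed n \<eta> f X V)"
    using M R F by (intro abs_diff_le_integral_of_deriv_bound[OF curves_C1(4)[OF cv j]
        speed_continuous[OF cv] speed_nonneg V'_le _ t]) auto
  then show ?thesis unfolding curves_endpoints(3)[OF cv j] glength_eq_integral_speed by simp
qed

lemma curve_endpoint_displacement:
  assumes cv: "(X, V) \<in> curves n p q" and M: "0 < M"
    and eta_ge: "\<And>x u. \<bar>u\<bar> \<le> R \<Longrightarrow> M \<le> \<eta> x u"
    and len: "vbracket n (snd p) + glength n \<eta> f X V \<le> R"
    and fext_le: "\<And>x j. \<bar>x - fst p\<bar> \<le> glength n \<eta> f X V / M \<Longrightarrow> \<bar>fext n f j x\<bar> \<le> F"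
  shows "\<bar>fst q - fst p\<bar> \<le> (1 / M + (1 + 2 * R * F / M)) * glength n \<eta> f X V"
    and "j \<le> n \<Longrightarrow> \<bar>snd q j - snd p j\<bar> \<le> (1 / M + (1 + 2 * R * F / M)) * glength n \<eta> f X V"
proof -
  have L: "0 \<le> glength n \<eta> f X V" by (rule glength_nonneg)
  have R: "0 \<le> R" using len one_le_vbracket[of n "snd p"] L by linarith
  have F: "0 \<le> F" using fext_le[of "fst p" 0] L M by force
  define D where "D = 1 + 2 * R * F / M"
  have "0 \<le> glength n \<eta> f X V / M" "0 \<le> D * glength n \<eta> f X V"
    using L M R F unfolding D_def by simp_all
  moreover have "(1 / M + D) * glength n \<eta> f X V = glength n \<eta> f X V / M + D * glength n \<eta> f X V"
    by (simp add: algebra_simps)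
  ultimately have "glength n \<eta> f X V / M \<le> (1 / M + D) * glength n \<eta> f X V"
    "D * glength n \<eta> f X V \<le> (1 / M + D) * glength n \<eta> f X V"
    by linarith+
  then show "\<bar>fst q - fst p\<bar> \<le> (1 / M + (1 + 2 * R * F / M)) * glength n \<eta> f X V"
    and "j \<le> n \<Longrightarrow> \<bar>snd q j - snd p j\<bar> \<le> (1 / M + (1 + 2 * R * F / M)) * glength n \<eta> f X V"
    using curve_x_displacement[OF cv M eta_ge len, of 1]
      curve_v_displacement[OF cv M eta_ge len fext_le, of j 1] curves_endpoints(2,4)[OF cv]
    unfolding D_def by fastforce+
qed

lemma unit_gdist_ball_bounds:
  assumes M: "0 < M" and eta_ge: "\<And>x u. \<bar>u\<bar> \<le> vbracket n (snd p0) + 1 \<Longrightarrow> M \<le> \<eta> x u"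
    and p: "gdist n \<eta> f p0 p < 1"
  shows "vbracket n (snd p) \<le> vbracket n (snd p0) + 1" "\<bar>fst p - fst p0\<bar> \<le> 1 / M"
proof -
  show "vbracket n (snd p) \<le> vbracket n (snd p0) + 1" using vbracket_le_gdist[of p p0] p by simp
  have "\<bar>fst p - fst p0\<bar> \<le> 1 / M * gdist n \<eta> f p0 p"
  proof (rule gdist_ge_if_short_curves_ge[OF _ p])
    fix X V assume cv: "(X, V) \<in> curves n p0 p" and L: "glength n \<eta> f X V < 1"
    have "\<bar>X 1 - fst p0\<bar> \<le> glength n \<eta> f X V / M"
      using L by (intro curve_x_displacement[OF cv M eta_ge]) auto
    then show "\<bar>fst p - fst p0\<bar> \<le> 1 / M * glength n \<eta> f X V"
      by (simp add: curves_endpoints(2)[OF cv])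
  qed (use M in simp)
  also have "\<dots> \<le> 1 / M * 1" using p M by (intro mult_left_mono) auto
  finally show "\<bar>fst p - fst p0\<bar> \<le> 1 / M" by simp
qed

lemma fext_bounded_on_compact:
  assumes "compact S"
  obtains F where "0 \<le> F" "\<And>x j. x \<in> S \<Longrightarrow> \<bar>fext n f j x\<bar> \<le> F"
proof -
  have "continuous_on S (\<lambda>x. \<Sum>i\<in>{1..n}. \<bar>fext n f i x\<bar>)"
    by (intro continuous_intros continuous_on_subset[OF fext_continuous]) simp
  then have "\<exists>B. \<forall>x\<in>S. \<bar>\<Sum>i\<in>{1..n}. \<bar>fext n f i x\<bar>\<bar> \<le> B"
    using assms by (rule continuous_on_compact_abs_bound)
  then obtain B where B: "\<forall>x\<in>S. \<bar>\<Sum>i\<in>{1..n}. \<bar>fext n f i x\<bar>\<bar> \<le> B" ..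
  have "\<bar>fext n f j x\<bar> \<le> max 0 B" if x: "x \<in> S" for x j
  proof (cases "j \<in> {1..n}")
    case True
    then have "\<bar>fext n f j x\<bar> \<le> (\<Sum>i\<in>{1..n}. \<bar>fext n f i x\<bar>)"
      by (intro member_le_sum) auto
    then have "\<bar>fext n f j x\<bar> \<le> B" using B[rule_format, OF x] by simp
    then show ?thesis by simp
  qed (auto simp: fext_def)
  then show ?thesis using that[of "max 0 B"] by simp
qed

lemma gdist_le_euclidean:
  assumes S: "convex S" "fst p \<in> S" "fst q \<in> S"
    and v: "\<And>j. j \<le> n \<Longrightarrow> \<bar>snd p j\<bar> \<le> R" "\<And>j. j \<le> n \<Longrightarrow> \<bar>snd q j\<bar> \<le> R"
    and eta_le: "\<And>x u. x \<in> S \<Longrightarrow> \<bar>u\<bar> \<le> R \<Longrightarrow> \<bar>\<eta> x u\<bar> \<le> H"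
    and fext_le: "\<And>x j. x \<in> S \<Longrightarrow> \<bar>fext n f j x\<bar> \<le> F" and R: "0 \<le> R"
  shows "gdist n \<eta> f p q
    \<le> (H + real (n + 1) * (2 * R * F)) * \<bar>fst q - fst p\<bar> + (\<Sum>j\<le>n. \<bar>snd q j - snd p j\<bar>)"
    (is "_ \<le> ?K")
proof -
  let ?X = "line_x p q" and ?V = "line_v p q"
  have cv: "(?X, ?V) \<in> curves n p q" by (rule line_in_curves)
  have speed_le: "speed n \<eta> f ?X ?V t \<le> ?K" if t: "t \<in> {0..1}" for t
  proof -
    have X: "?X t \<in> S" unfolding line_x_def using convex_line_mem[OF S t] .
    have V: "\<bar>?V j t\<bar> \<le> R" if "j \<le> n" for j
      unfolding line_v_def using v[OF that] t by (intro abs_line_le)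
    have "\<bar>twisted_deriv n f ?X ?V j t\<bar> \<le> \<bar>snd q j - snd p j\<bar> + 2 * R * F * \<bar>fst q - fst p\<bar>"
      if j: "j \<in> {..n}" for j
    proof -
      have c: "\<bar>twist_coeff n f (\<lambda>i. ?V i t) (?X t) j\<bar> \<le> 2 * R * F"
        using V fext_le[OF X] R j by (intro abs_twist_coeff_le) auto
      have "\<bar>twisted_deriv n f ?X ?V j t\<bar>
          \<le> \<bar>snd q j - snd p j\<bar> + \<bar>twist_coeff n f (\<lambda>i. ?V i t) (?X t) j\<bar> * \<bar>fst q - fst p\<bar>"
        unfolding twisted_deriv_def deriv_line_x deriv_line_v by (simp add: abs_mult[symmetric] abs_triangle_ineq)
      then show ?thesis using mult_right_mono[OF c abs_ge_zero, of "fst q - fst p"] by linarith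
    qed
    then have "(\<Sum>j\<le>n. \<bar>twisted_deriv n f ?X ?V j t\<bar>)
        \<le> (\<Sum>j\<le>n. \<bar>snd q j - snd p j\<bar> + 2 * R * F * \<bar>fst q - fst p\<bar>)"
      by (rule sum_mono)
    also have "\<dots> = (\<Sum>j\<le>n. \<bar>snd q j - snd p j\<bar>) + real (n + 1) * (2 * R * F) * \<bar>fst q - fst p\<bar>"
      by (simp add: sum.distrib)
    finally have "(\<Sum>j\<le>n. \<bar>twisted_deriv n f ?X ?V j t\<bar>)
        \<le> (\<Sum>j\<le>n. \<bar>snd q j - snd p j\<bar>) + real (n + 1) * (2 * R * F) * \<bar>fst q - fst p\<bar>" .
    moreover have "\<bar>\<eta> (?X t) (?V 0 t)\<bar> * \<bar>deriv ?X t\<bar> \<le> H * \<bar>fst q - fst p\<bar>"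
      unfolding deriv_line_x by (intro mult_right_mono eta_le X V) auto
    ultimately show ?thesis
      using speed_le_sum_abs[of n \<eta> f ?X ?V t] by (simp only: distrib_right)
  qed
  have "glength n \<eta> f ?X ?V \<le> integral {0..1} (\<lambda>_::real. ?K)"
    unfolding glength_eq_integral_speed
    by (rule integral_le[OF integrable_continuous_real[OF speed_continuous[OF cv]]
          integrable_const_ivl speed_le])
  then show ?thesis using gdist_le_glength[OF cv, of \<eta> f] by simp
qed

lemma gdist_le_euclidean_near:
  obtains K where "\<And>q. \<bar>fst q - fst p\<bar> \<le> 1 \<Longrightarrow> (\<And>j. j \<le> n \<Longrightarrow> \<bar>snd q j - snd p j\<bar> \<le> 1) \<Longrightarrow>
    gdist n \<eta> f q p \<le> K * \<bar>fst p - fst q\<bar> + (\<Sum>j\<le>n. \<bar>snd p j - snd q j\<bar>)"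
proof -
  define S where "S = cball (fst p) 1"
  define R where "R = (\<Sum>j\<le>n. \<bar>snd p j\<bar>) + 1"
  have R: "0 \<le> R" unfolding R_def by (simp add: sum_nonneg)
  have p_le: "\<bar>snd p j\<bar> + 1 \<le> R" if "j \<le> n" for j
    using member_le_sum[of j "{..n}" "\<lambda>i. \<bar>snd p i\<bar>"] that unfolding R_def by simp
  have "compact (S \<times> cball (0::real) R)" unfolding S_def by (intro compact_Times compact_cball)
  with continuous_on_subset[OF eta_continuous subset_UNIV]
  have "\<exists>H. \<forall>z\<in>S \<times> cball (0::real) R. \<bar>(\<lambda>(x, u). \<eta> x u) z\<bar> \<le> H"
    by (rule continuous_on_compact_abs_bound)
  then obtain H where H: "\<forall>z\<in>S \<times> cball (0::real) R. \<bar>(\<lambda>(x, u). \<eta> x u) z\<bar> \<le> H" ..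
  have eta_le: "\<bar>\<eta> x u\<bar> \<le> H" if "x \<in> S" "\<bar>u\<bar> \<le> R" for x u
    using H that by force
  obtain F where F: "\<And>x j. x \<in> S \<Longrightarrow> \<bar>fext n f j x\<bar> \<le> F"
    unfolding S_def by (rule fext_bounded_on_compact[OF compact_cball]) blast
  show ?thesis
  proof (rule that)
    fix q assume x: "\<bar>fst q - fst p\<bar> \<le> 1" and v: "\<And>j. j \<le> n \<Longrightarrow> \<bar>snd q j - snd p j\<bar> \<le> 1"
    have "convex S" "fst p \<in> S" "fst q \<in> S" using x unfolding S_def by (simp_all add: dist_real_def)
    moreover have "\<bar>snd q j\<bar> \<le> R" "\<bar>snd p j\<bar> \<le> R" if "j \<le> n" for j
      using v[OF that] p_le[OF that] by linarith+
    ultimately show "gdist n \<eta> f q p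
        \<le> (H + real (n + 1) * (2 * R * F)) * \<bar>fst p - fst q\<bar> + (\<Sum>j\<le>n. \<bar>snd p j - snd q j\<bar>)"
      using eta_le F R by (intro gdist_le_euclidean) auto
  qed
qed

lemma gdist_tendsto_zero:
  assumes x: "(\<lambda>k. fst (Q k)) \<longlonglongrightarrow> fst p"
    and v: "\<And>j. j \<le> n \<Longrightarrow> (\<lambda>k. snd (Q k) j) \<longlonglongrightarrow> snd p j"
  shows "(\<lambda>k. gdist n \<eta> f (Q k) p) \<longlonglongrightarrow> 0"
proof (rule gdist_le_euclidean_near[of p])
  fix K assume K: "\<And>q. \<bar>fst q - fst p\<bar> \<le> 1 \<Longrightarrow> (\<And>j. j \<le> n \<Longrightarrow> \<bar>snd q j - snd p j\<bar> \<le> 1) \<Longrightarrow>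
    gdist n \<eta> f q p \<le> K * \<bar>fst p - fst q\<bar> + (\<Sum>j\<le>n. \<bar>snd p j - snd q j\<bar>)"
  define e where "e k = K * \<bar>fst p - fst (Q k)\<bar> + (\<Sum>j\<le>n. \<bar>snd p j - snd (Q k) j\<bar>)" for k
  have "\<forall>\<^sub>F k in sequentially. dist (fst (Q k)) (fst p) < 1" using tendstoD[OF x] by simp
  moreover have "\<forall>\<^sub>F k in sequentially. \<forall>j\<in>{..n}. dist (snd (Q k) j) (snd p j) < 1"
    using tendstoD[OF v] by (intro eventually_ball_finite) auto
  ultimately have upper: "\<forall>\<^sub>F k in sequentially. gdist n \<eta> f (Q k) p \<le> e k"
  proof eventually_elim
    case (elim k)
    have "\<bar>fst (Q k) - fst p\<bar> \<le> 1" using elim(1) by (simp add: dist_real_def)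
    moreover have "\<bar>snd (Q k) j - snd p j\<bar> \<le> 1" if "j \<le> n" for j
      using bspec[OF elim(2), of j] that by (simp add: dist_real_def)
    ultimately show ?case unfolding e_def by (rule K)
  qed
  have e_lim: "e \<longlonglongrightarrow> 0"
  proof -
    have "(\<lambda>k. fst p - fst (Q k)) \<longlonglongrightarrow> 0"
      using tendsto_diff[OF tendsto_const x, of "fst p"] by simp
    moreover have "(\<lambda>k. snd p j - snd (Q k) j) \<longlonglongrightarrow> 0" if "j \<in> {..n}" for j
      using tendsto_diff[OF tendsto_const v, of j "snd p j"] that by simp
    ultimately show ?thesis unfolding e_def
      by (intro tendsto_add_zero tendsto_mult_right_zero tendsto_null_sum tendsto_rabs_zero)
  qed
  have lower: "\<forall>\<^sub>F k in sequentially. 0 \<le> gdist n \<eta> f (Q k) p" by (simp add: gdist_nonneg)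
  from lower upper tendsto_const e_lim show ?thesis by (rule tendsto_sandwich)
qed

end

locale eta_bounded_below = continuous_coefficients +
  fixes r :: "real \<Rightarrow> real"
  assumes r_continuous: "continuous_on UNIV r"
    and r_pos: "\<And>u. 0 < r u"
    and eta_ge_r: "\<And>x u. r u \<le> \<eta> x u"
begin

lemma eta_bounded_below_on_strip:
  obtains M where "0 < M" "\<And>x u. \<bar>u\<bar> \<le> R \<Longrightarrow> M \<le> \<eta> x u"
proof -
  obtain M where "0 < M" "\<And>u. u \<in> {-R..R} \<Longrightarrow> M \<le> r u"
    using continuous_on_compact_pos_bound_below[OF continuous_on_subset[OF r_continuous]]
      r_pos by (metis compact_Icc subset_UNIV)
  then show ?thesis using that eta_ge_r by (meson abs_le_iff atLeastAtMost_iff minus_le_iff order_trans)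
qed

lemma gdist_controls_coordinates:
  obtains C where "0 < C"
    and "\<And>p q. gdist n \<eta> f p0 p < 1 \<Longrightarrow> gdist n \<eta> f p q < 1 \<Longrightarrow>
      \<bar>fst q - fst p\<bar> \<le> C * gdist n \<eta> f p q"
    and "\<And>p q j. gdist n \<eta> f p0 p < 1 \<Longrightarrow> gdist n \<eta> f p q < 1 \<Longrightarrow> j \<le> n \<Longrightarrow>
      \<bar>snd q j - snd p j\<bar> \<le> C * gdist n \<eta> f p q"
proof -
  define R where "R = vbracket n (snd p0) + 2"
  obtain M where M: "0 < M" and eta_ge: "\<And>x u. \<bar>u\<bar> \<le> R \<Longrightarrow> M \<le> \<eta> x u"
    using eta_bounded_below_on_strip by blast
  have near: "vbracket n (snd p) \<le> R - 1" "\<bar>fst p - fst p0\<bar> \<le> 1 / M"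
    if "gdist n \<eta> f p0 p < 1" for p
    using unit_gdist_ball_bounds[OF M _ that] eta_ge unfolding R_def by auto
  define S where "S = {fst p0 - 2 / M .. fst p0 + 2 / M}"
  obtain F where F: "0 \<le> F" "\<And>x j. x \<in> S \<Longrightarrow> \<bar>fext n f j x\<bar> \<le> F"
    using fext_bounded_on_compact[of S] unfolding S_def by blast
  have R: "0 \<le> R" unfolding R_def using one_le_vbracket[of n "snd p0"] by simp
  define C where "C = 1 / M + (1 + 2 * R * F / M)"
  have C: "0 < C" unfolding C_def using M R F by (simp add: add_pos_nonneg)
  have short_curve: "\<bar>fst q - fst p\<bar> \<le> C * glength n \<eta> f X V
      \<and> (\<forall>j\<le>n. \<bar>snd q j - snd p j\<bar> \<le> C * glength n \<eta> f X V)"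
    if p: "gdist n \<eta> f p0 p < 1" and cv: "(X, V) \<in> curves n p q" and L: "glength n \<eta> f X V < 1"
    for p q X V
  proof -
    have len: "vbracket n (snd p) + glength n \<eta> f X V \<le> R" using near(1)[OF p] L by simp
    have "\<bar>fext n f j x\<bar> \<le> F" if "\<bar>x - fst p\<bar> \<le> glength n \<eta> f X V / M" for x j
    proof (rule F(2))
      have "glength n \<eta> f X V / M \<le> 1 / M" using L M by (simp add: divide_right_mono)
      then show "x \<in> S" using that near(2)[OF p] unfolding S_def by (auto simp: abs_le_iff)
    qed
    from curve_endpoint_displacement[OF cv M eta_ge len this] show ?thesis unfolding C_def by blast
  qed
  show ?thesis
  proof (rule that[OF C])
    fix p q assume "gdist n \<eta> f p0 p < 1" "gdist n \<eta> f p q < 1"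
    then show "\<bar>fst q - fst p\<bar> \<le> C * gdist n \<eta> f p q"
      using short_curve by (intro gdist_ge_if_short_curves_ge[OF C]) blast+
  next
    fix p q j assume "gdist n \<eta> f p0 p < 1" "gdist n \<eta> f p q < 1" "j \<le> n"
    then show "\<bar>snd q j - snd p j\<bar> \<le> C * gdist n \<eta> f p q"
      using short_curve by (intro gdist_ge_if_short_curves_ge[OF C]) blast+
  qed
qed

theorem gcomplete: "gcomplete n \<eta> f"
  unfolding gcomplete_def
proof (intro allI impI, elim conjE)
  fix P :: "nat \<Rightarrow> real \<times> (nat \<Rightarrow> real)"
  assume cauchy: "\<forall>e>0. \<exists>N. \<forall>m\<ge>N. \<forall>k\<ge>N. gdist n \<eta> f (P m) (P k) < e"
  obtain N where N: "\<And>m k. m \<ge> N \<Longrightarrow> k \<ge> N \<Longrightarrow> gdist n \<eta> f (P m) (P k) < 1"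
    using cauchy by (meson zero_less_one)
  obtain C where C: "0 < C"
    and x_le: "\<And>p q. gdist n \<eta> f (P N) p < 1 \<Longrightarrow> gdist n \<eta> f p q < 1 \<Longrightarrow>
      \<bar>fst q - fst p\<bar> \<le> C * gdist n \<eta> f p q"
    and v_le: "\<And>p q j. gdist n \<eta> f (P N) p < 1 \<Longrightarrow> gdist n \<eta> f p q < 1 \<Longrightarrow> j \<le> n \<Longrightarrow>
      \<bar>snd q j - snd p j\<bar> \<le> C * gdist n \<eta> f p q"
    using gdist_controls_coordinates[of "P N"] by metis
  have "Cauchy (\<lambda>k. fst (P k))"
    by (rule Cauchy_if_dominated[OF cauchy _ C, of N]) (simp add: x_le N)
  then obtain x where x: "(\<lambda>k. fst (P k)) \<longlonglongrightarrow> x"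
    using Cauchy_convergent_iff convergent_def by blast
  have "Cauchy (\<lambda>k. snd (P k) j)" if "j \<le> n" for j
    by (rule Cauchy_if_dominated[OF cauchy _ C, of N]) (simp add: v_le N that)
  then have "convergent (\<lambda>k. snd (P k) j)" if "j \<le> n" for j
    using that Cauchy_convergent_iff by blast
  define v where "v j = (if j \<le> n then lim (\<lambda>k. snd (P k) j) else 0)" for j
  have v: "(\<lambda>k. snd (P k) j) \<longlonglongrightarrow> v j" if "j \<le> n" for j
    using \<open>\<And>j. j \<le> n \<Longrightarrow> convergent _\<close>[OF that] that unfolding v_def
    by (simp add: convergent_LIMSEQ_iff)
  have "(x, v) \<in> Mpts n" unfolding Mpts_def v_def by auto
  moreover have "(\<lambda>k. gdist n \<eta> f (P k) (x, v)) \<longlonglongrightarrow> 0"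
    using x v by (intro gdist_tendsto_zero) simp_all
  ultimately show "\<exists>p\<in>Mpts n. (\<lambda>k. gdist n \<eta> f (P k) p) \<longlonglongrightarrow> 0" by blast
qed

end

lemma smooth_imp_continuous: "smooth h \<Longrightarrow> continuous_on UNIV h"
  unfolding smooth_def by (metis Ck.simps(1))

theorem lemma3p2:
  fixes n :: nat and f :: "nat \<Rightarrow> real \<Rightarrow> real" and \<eta> :: "real \<Rightarrow> real \<Rightarrow> real"
    and r :: "real \<Rightarrow> real"
  assumes f_smooth: "\<And>j. 1 \<le> j \<Longrightarrow> j \<le> n \<Longrightarrow> smooth (f j)"
    and eta_smooth: "smooth (\<lambda>(x, u). \<eta> x u)"
    and eta_pos: "\<And>x u. \<eta> x u > 0"
    and r_cont: "continuous_on UNIV r"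
    and r_pos: "\<And>u. r u > 0"
    and eta_ge: "\<And>x u. \<eta> x u \<ge> r u"
  shows "gcomplete n \<eta> f"
proof -
  have "continuous_on UNIV (fext n f j)" for j
    using f_smooth[of j] by (auto simp: fext_def smooth_imp_continuous)
  then interpret eta_bounded_below n \<eta> f r
    using smooth_imp_continuous[OF eta_smooth] r_cont r_pos eta_ge by unfold_locales auto
  show ?thesis by (rule gcomplete)
qed

end
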